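(* Let $G$ be a finite group. Then the power graph $\mathscr{G}(G)$ is Class 2 if and only if $G$ is cyclic of order $p^a$ for some odd prime $p$ and integer $a\geq 1$.
   Context: For a finite group $G$, the power graph $\mathscr{G}(G)$ is the simple graph with vertex set the elements of $G$, in which two distinct elements $a,b$ are adjacent if and only if one is a power of the other. For a finite simple graph $\Gamma$, $\chi'(\Gamma)$ denotes its edge-chromatic number (the least number of colors in a proper edge coloring) and $\Delta(\Gamma)$ its maximum vertex degree. By Vizing's theorem $\Delta(\Gamma)\le\chi'(\Gamma)\le\Delta(\Gamma)+1$; $\Gamma$ is Class 1 if $\chi'(\Gamma)=\Delta(\Gamma)$ and Class 2 if $\chi'(\Gamma)=\Delta(\Gamma)+1$. *)

theory Defs
  imports "HOL-Algebra.Elementary_Groups" "HOL-Computational_Algebra.Primes"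
begin

text \<open>Simple graphs given by a vertex set V and an adjacency relation E
  (intended symmetric and irreflexive on V).\<close>

definition graph_edges :: "'a set \<Rightarrow> ('a \<Rightarrow> 'a \<Rightarrow> bool) \<Rightarrow> 'a set set" where
  "graph_edges V E = {{u, v} | u v. u \<in> V \<and> v \<in> V \<and> E u v}"

definition vertex_degree :: "'a set \<Rightarrow> ('a \<Rightarrow> 'a \<Rightarrow> bool) \<Rightarrow> 'a \<Rightarrow> nat" where
  "vertex_degree V E v = card {u \<in> V. E v u}"

definition max_degree :: "'a set \<Rightarrow> ('a \<Rightarrow> 'a \<Rightarrow> bool) \<Rightarrow> nat" where
  "max_degree V E = Max (vertex_degree V E ` V)"

definition proper_edge_colouring ::
  "'a set \<Rightarrow> ('a \<Rightarrow> 'a \<Rightarrow> bool) \<Rightarrow> nat \<Rightarrow> ('a set \<Rightarrow> nat) \<Rightarrow> bool" where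
  "proper_edge_colouring V E k c \<longleftrightarrow>
     (\<forall>e \<in> graph_edges V E. c e < k) \<and>
     (\<forall>e1 \<in> graph_edges V E. \<forall>e2 \<in> graph_edges V E.
        e1 \<noteq> e2 \<and> e1 \<inter> e2 \<noteq> {} \<longrightarrow> c e1 \<noteq> c e2)"

definition edge_chromatic_number :: "'a set \<Rightarrow> ('a \<Rightarrow> 'a \<Rightarrow> bool) \<Rightarrow> nat" where
  "edge_chromatic_number V E = (LEAST k. \<exists>c. proper_edge_colouring V E k c)"

definition is_class2 :: "'a set \<Rightarrow> ('a \<Rightarrow> 'a \<Rightarrow> bool) \<Rightarrow> bool" where
  "is_class2 V E \<longleftrightarrow> edge_chromatic_number V E = max_degree V E + 1"

definition power_adj :: "('a, 'b) monoid_scheme \<Rightarrow> 'a \<Rightarrow> 'a \<Rightarrow> bool" where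
  "power_adj G a b \<longleftrightarrow> a \<noteq> b \<and>
     ((\<exists>n::int. b = a [^]\<^bsub>G\<^esub> n) \<or> (\<exists>n::int. a = b [^]\<^bsub>G\<^esub> n))"

end

(*
  The identity is adjacent to every other element of G, so the maximum degree of the power graph
  is |G| - 1, and the graph is Class 2 exactly when it has no proper edge colouring with |G| - 1
  colours.

  If G is cyclic of order p^a, its subgroups form a chain, so of any two elements one is a power
  of the other: the power graph is complete. For odd p it has an odd number n >= 3 of vertices,
  and an (n-1)-colouring would make every colour class a perfect matching, which is impossible.

  Otherwise, for even |G| the round-robin colouring of the complete graph restricts to the power
  graph. For |G| = 2k+1 it suffices to find disjoint sets S, T with no edges between them and
  k <= |S| |T|: labelling the vertices suitably, non-edges in S x T realise each label sum
  1, 3, ..., 2k-1, and a modification of the colouring (x + y) mod 2k of the complete graph by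
  Kempe-type swaps yields a 2k-colouring. If G is not cyclic, take S = {g} for g of maximal order
  and T the complement of the subgroup generated by g, which has at least half of the elements.
  If G is cyclic of order AB with coprime A, B >= 3, take the nontrivial elements of order
  dividing A and B respectively.
*)
theory Submission
  imports Defs "HOL-Algebra.Multiplicative_Group" "HOL-Number_Theory.Cong"
begin

section \<open>Edge colourings\<close>

definition pair_colour :: "('a \<Rightarrow> 'a \<Rightarrow> nat) \<Rightarrow> 'a set \<Rightarrow> nat" where
  "pair_colour f e = (SOME k. \<exists>u v. e = {u, v} \<and> k = f u v)"

lemma pair_colour_doubleton:
  assumes "\<And>x y. f x y = f y x"
  shows "pair_colour f {u, v} = f u v"
  unfolding pair_colour_def
proof (rule some_equality)
  show "\<And>k. \<exists>x y. {u, v} = {x, y} \<and> k = f x y \<Longrightarrow> k = f u v"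
    using assms by (auto simp: doubleton_eq_iff)
qed blast

lemma graph_edgesE:
  assumes "e \<in> graph_edges V E"
  obtains u v where "e = {u, v}" "u \<in> V" "v \<in> V" "E u v"
  using assms unfolding graph_edges_def by blast

lemma graph_edges_at_vertex:
  assumes sym: "\<And>x y. x \<in> V \<Longrightarrow> y \<in> V \<Longrightarrow> E x y \<Longrightarrow> E y x"
    and "e \<in> graph_edges V E" "w \<in> e"
  obtains y where "e = {w, y}" "w \<in> V" "y \<in> V" "E w y"
  using assms(2) proof (rule graph_edgesE)
  fix u v assume uv: "e = {u, v}" "u \<in> V" "v \<in> V" "E u v"
  have "E v u" using sym[OF uv(2-4)] .
  then show thesis
    using that uv \<open>w \<in> e\<close> by (metis empty_iff insertE insert_commute)
qed

lemma graph_edges_subset_Pow: "graph_edges V E \<subseteq> Pow V"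
  unfolding graph_edges_def by auto

lemma proper_edge_colouring_less:
  "proper_edge_colouring V E K c \<Longrightarrow> e \<in> graph_edges V E \<Longrightarrow> c e < K"
  unfolding proper_edge_colouring_def by blast

lemma proper_edge_colouring_adjacent:
  "proper_edge_colouring V E K c \<Longrightarrow> e \<in> graph_edges V E \<Longrightarrow> e' \<in> graph_edges V E
    \<Longrightarrow> e \<noteq> e' \<Longrightarrow> e \<inter> e' \<noteq> {} \<Longrightarrow> c e \<noteq> c e'"
  unfolding proper_edge_colouring_def by blast

lemma proper_edge_colouring_pair_colour:
  assumes sym: "\<And>x y. x \<in> V \<Longrightarrow> y \<in> V \<Longrightarrow> E x y \<Longrightarrow> E y x"
    and f_sym: "\<And>x y. f x y = f y x"
    and f_less: "\<And>u v. u \<in> V \<Longrightarrow> v \<in> V \<Longrightarrow> E u v \<Longrightarrow> f u v < K"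
    and f_inj: "\<And>w y y'. w \<in> V \<Longrightarrow> y \<in> V \<Longrightarrow> y' \<in> V \<Longrightarrow> E w y \<Longrightarrow> E w y'
                  \<Longrightarrow> y \<noteq> y' \<Longrightarrow> f w y \<noteq> f w y'"
  shows "proper_edge_colouring V E K (pair_colour f)"
  unfolding proper_edge_colouring_def
proof (intro conjI ballI impI)
  fix e assume "e \<in> graph_edges V E"
  then show "pair_colour f e < K"
    by (rule graph_edgesE) (simp add: pair_colour_doubleton[OF f_sym] f_less)
next
  fix e e' assume e: "e \<in> graph_edges V E" and e': "e' \<in> graph_edges V E"
    and ne: "e \<noteq> e' \<and> e \<inter> e' \<noteq> {}"
  then obtain w where "w \<in> e" "w \<in> e'" by blast
  obtain y where y: "e = {w, y}" "w \<in> V" "y \<in> V" "E w y"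
    using graph_edges_at_vertex[OF sym e \<open>w \<in> e\<close>] by blast
  obtain y' where y': "e' = {w, y'}" "y' \<in> V" "E w y'"
    using graph_edges_at_vertex[OF sym e' \<open>w \<in> e'\<close>] by blast
  have "y \<noteq> y'" using ne y y' by auto
  then have "f w y \<noteq> f w y'" using f_inj y y' by blast
  then show "pair_colour f e \<noteq> pair_colour f e'"
    using y(1) y'(1) by (simp add: pair_colour_doubleton[OF f_sym])
qed

lemma proper_edge_colouring_from_complete:
  assumes lab: "bij_betw lab V {0..<n}"
    and sym: "\<And>x y. x \<in> V \<Longrightarrow> y \<in> V \<Longrightarrow> E x y \<Longrightarrow> E y x"
    and irr: "\<And>x. x \<in> V \<Longrightarrow> \<not> E x x"
    and col_sym: "\<And>p q. col p q = col q p"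
    and col_less: "\<And>p q. p < n \<Longrightarrow> q < n \<Longrightarrow> p \<noteq> q \<Longrightarrow> col p q < K"
    and col_inj: "\<And>p q r. p < n \<Longrightarrow> q < n \<Longrightarrow> r < n \<Longrightarrow> p \<noteq> q \<Longrightarrow> p \<noteq> r \<Longrightarrow> q \<noteq> r
                    \<Longrightarrow> col p q \<noteq> col p r"
  shows "\<exists>c. proper_edge_colouring V E K c"
proof -
  have lab_less: "lab x < n" if "x \<in> V" for x
    using lab that by (auto dest: bij_betw_apply)
  have lab_ne: "lab x \<noteq> lab y" if "x \<in> V" "y \<in> V" "x \<noteq> y" for x y
    using lab that by (auto simp: bij_betw_def inj_on_def)
  have "proper_edge_colouring V E K (pair_colour (\<lambda>u v. col (lab u) (lab v)))"
  proof (rule proper_edge_colouring_pair_colour)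
    show "\<And>x y. x \<in> V \<Longrightarrow> y \<in> V \<Longrightarrow> E x y \<Longrightarrow> E y x" by (rule sym)
    show "\<And>p q. col (lab p) (lab q) = col (lab q) (lab p)" by (rule col_sym)
    fix u v assume "u \<in> V" "v \<in> V" "E u v"
    moreover from this have "u \<noteq> v" using irr by blast
    ultimately show "col (lab u) (lab v) < K" by (simp add: col_less lab_less lab_ne)
  next
    fix w y y' assume "w \<in> V" "y \<in> V" "y' \<in> V" "E w y" "E w y'" "y \<noteq> y'"
    moreover from this have "w \<noteq> y" "w \<noteq> y'" using irr by blast+
    ultimately show "col (lab w) (lab y) \<noteq> col (lab w) (lab y')"
      by (simp add: col_inj lab_less lab_ne)
  qed
  then show ?thesis by blast
qed

lemma mod_add_left_cancel_less:
  fixes n :: nat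
  assumes "(p + q) mod n = (p + r) mod n" "q < n" "r < n"
  shows "q = r"
  using assms cong_add_lcancel_nat[of p q r n] cong_less_modulus_unique_nat
  unfolding cong_def by blast

lemma mod_mult_left_cancel_less:
  fixes n :: nat
  assumes "coprime a n" "(a * q) mod n = (a * r) mod n" "q < n" "r < n"
  shows "q = r"
  using assms cong_mult_lcancel_nat[where k = a and m = n and a = q and b = r] cong_less_modulus_unique_nat
  unfolding cong_def by blast

lemma proper_edge_colouring_card:
  assumes "finite V"
    and sym: "\<And>x y. x \<in> V \<Longrightarrow> y \<in> V \<Longrightarrow> E x y \<Longrightarrow> E y x"
    and irr: "\<And>x. x \<in> V \<Longrightarrow> \<not> E x x"
  shows "\<exists>c. proper_edge_colouring V E (card V) c"
proof -
  obtain lab where lab: "bij_betw lab V {0..<card V}"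
    using ex_bij_betw_finite_nat[OF \<open>finite V\<close>] by blast
  show ?thesis
  proof (rule proper_edge_colouring_from_complete[OF lab sym irr, where col = "\<lambda>p q. (p + q) mod card V"])
    fix p q r :: nat assume "q < card V" "r < card V" "q \<noteq> r"
    then show "(p + q) mod card V \<noteq> (p + r) mod card V"
      using mod_add_left_cancel_less[of p q "card V" r] by blast
  next
    fix p q :: nat assume "p < card V"
    then show "(p + q) mod card V < card V" by simp
  next
    show "\<And>p q. (p + q) mod card V = (q + p) mod card V" by (simp add: add.commute)
  qed
qed

text \<open>The round-robin schedule: in the colouring (p + q) mod m of the first m vertices the
  colour 2p mod m is missing at p, and for odd m these colours are distinct, so they can be given
  to the edges from p to the last vertex m.\<close>
definition round_robin_colour :: "nat \<Rightarrow> nat \<Rightarrow> nat \<Rightarrow> nat" where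
  "round_robin_colour m p q =
     (if p = m then 2 * q mod m else if q = m then 2 * p mod m else (p + q) mod m)"

lemma round_robin_colour_inj:
  assumes "odd m" "p \<le> m" "q \<le> m" "r \<le> m" "p \<noteq> q" "p \<noteq> r" "q \<noteq> r"
  shows "round_robin_colour m p q \<noteq> round_robin_colour m p r"
proof (cases "p = m")
  case True
  then have "q < m" "r < m" using assms by auto
  moreover have "coprime 2 m" using \<open>odd m\<close> by simp
  ultimately have "2 * q mod m \<noteq> 2 * r mod m"
    using \<open>q \<noteq> r\<close> mod_mult_left_cancel_less[of 2 m q r] by blast
  then show ?thesis using True by (simp add: round_robin_colour_def)
next
  case False
  define q' where "q' x = (if x = m then p else x)" for x
  have colour: "round_robin_colour m p x = (p + q' x) mod m" if "x \<le> m" "x \<noteq> p" for x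
  proof (cases "x = m")
    case True
    then show ?thesis using False unfolding round_robin_colour_def q'_def by (simp add: mult_2)
  qed (use that False in \<open>simp add: round_robin_colour_def q'_def\<close>)
  have "p < m" using assms(2) False by simp
  then have "q' x < m" if "x \<le> m" for x using that unfolding q'_def by simp
  moreover have "q' q \<noteq> q' r" using assms(5-7) unfolding q'_def by simp
  ultimately have "(p + q' q) mod m \<noteq> (p + q' r) mod m"
    using mod_add_left_cancel_less[of p "q' q" m "q' r"] assms(3,4) by blast
  then show ?thesis using assms(3-6) colour[of q] colour[of r] by simp
qed

lemma proper_edge_colouring_even_card:
  assumes "finite V" "even (card V)" "card V \<ge> 2"
    and sym: "\<And>x y. x \<in> V \<Longrightarrow> y \<in> V \<Longrightarrow> E x y \<Longrightarrow> E y x"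
    and irr: "\<And>x. x \<in> V \<Longrightarrow> \<not> E x x"
  shows "\<exists>c. proper_edge_colouring V E (card V - 1) c"
proof -
  define m where "m = card V - 1"
  have "odd m" "m \<ge> 1" using assms(2,3) unfolding m_def by auto
  obtain lab where lab: "bij_betw lab V {0..<Suc m}"
    using ex_bij_betw_finite_nat[OF \<open>finite V\<close>] assms(3) unfolding m_def by auto
  show ?thesis unfolding m_def[symmetric]
  proof (rule proper_edge_colouring_from_complete[OF lab sym irr, where col = "round_robin_colour m"])
    show "\<And>p q. round_robin_colour m p q = round_robin_colour m q p"
      unfolding round_robin_colour_def by (simp add: add.commute)
    show "\<And>p q. p < Suc m \<Longrightarrow> q < Suc m \<Longrightarrow> p \<noteq> q \<Longrightarrow> round_robin_colour m p q < m"
      using \<open>m \<ge> 1\<close> unfolding round_robin_colour_def by auto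
  qed (use round_robin_colour_inj[OF \<open>odd m\<close>] in auto)
qed

lemma vertex_degree_le_card:
  assumes "finite V" and irr: "\<And>x. x \<in> V \<Longrightarrow> \<not> E x x" and "v \<in> V"
  shows "vertex_degree V E v \<le> card V - 1"
proof -
  have "card {u \<in> V. E v u} \<le> card (V - {v})"
    using assms by (intro card_mono) auto
  then show ?thesis
    unfolding vertex_degree_def using assms by simp
qed

lemma vertex_degree_universal:
  assumes "finite V" and irr: "\<And>x. x \<in> V \<Longrightarrow> \<not> E x x" and "v \<in> V"
    and univ: "\<And>u. u \<in> V \<Longrightarrow> u \<noteq> v \<Longrightarrow> E v u"
  shows "vertex_degree V E v = card V - 1"
proof -
  have "{u \<in> V. E v u} = V - {v}" using irr univ \<open>v \<in> V\<close> by auto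
  then show ?thesis unfolding vertex_degree_def using assms by simp
qed

lemma max_degree_universal:
  assumes "finite V" and irr: "\<And>x. x \<in> V \<Longrightarrow> \<not> E x x" and "v \<in> V"
    and univ: "\<And>u. u \<in> V \<Longrightarrow> u \<noteq> v \<Longrightarrow> E v u"
  shows "max_degree V E = card V - 1"
  unfolding max_degree_def
proof (rule Max_eqI)
  show "card V - 1 \<in> vertex_degree V E ` V"
    using vertex_degree_universal[of V E v, OF assms] \<open>v \<in> V\<close> by force
qed (use assms vertex_degree_le_card[of V E] in auto)

lemma edge_chromatic_number_le:
  "proper_edge_colouring V E K c \<Longrightarrow> edge_chromatic_number V E \<le> K"
  unfolding edge_chromatic_number_def by (rule Least_le) blast

lemma proper_edge_colouring_mono:
  "proper_edge_colouring V E K c \<Longrightarrow> K \<le> K' \<Longrightarrow> proper_edge_colouring V E K' c"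
  unfolding proper_edge_colouring_def by fastforce

lemma not_class2_if_universal_vertex:
  assumes "finite V" and irr: "\<And>x. x \<in> V \<Longrightarrow> \<not> E x x" and "v \<in> V"
    and univ: "\<And>u. u \<in> V \<Longrightarrow> u \<noteq> v \<Longrightarrow> E v u"
    and "proper_edge_colouring V E (card V - 1) c"
  shows "\<not> is_class2 V E"
  using edge_chromatic_number_le[OF assms(5)] max_degree_universal[of V E v, OF assms(1-4)]
  unfolding is_class2_def by simp

lemma colour_at_vertex_of_full_degree:
  assumes col: "proper_edge_colouring V E K c" and "v \<in> V"
    and deg: "vertex_degree V E v = K" and "j < K"
  obtains u where "u \<in> V" "E v u" "c {v, u} = j"
proof -
  let ?N = "{u \<in> V. E v u}"
  have edge: "{v, u} \<in> graph_edges V E" if "u \<in> ?N" for u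
    using that \<open>v \<in> V\<close> unfolding graph_edges_def by blast
  have "inj_on (\<lambda>u. c {v, u}) ?N"
  proof (rule inj_onI, rule ccontr)
    fix u u' assume u: "u \<in> ?N" and u': "u' \<in> ?N" and "c {v, u} = c {v, u'}" "u \<noteq> u'"
    moreover have "{v, u} \<noteq> {v, u'}" using \<open>u \<noteq> u'\<close> by (auto simp: doubleton_eq_iff)
    ultimately show False
      using proper_edge_colouring_adjacent[OF col edge[OF u] edge[OF u']] by blast
  qed
  then have "card ((\<lambda>u. c {v, u}) ` ?N) = card {..<K}"
    using deg unfolding vertex_degree_def by (simp add: card_image)
  moreover have "(\<lambda>u. c {v, u}) ` ?N \<subseteq> {..<K}"
    using proper_edge_colouring_less[OF col edge] by blast
  ultimately have "(\<lambda>u. c {v, u}) ` ?N = {..<K}" by (simp add: card_subset_eq)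
  then have "j \<in> (\<lambda>u. c {v, u}) ` ?N" using \<open>j < K\<close> by simp
  then show thesis using that by blast
qed

lemma even_card_if_colour_class_covers:
  assumes col: "proper_edge_colouring V E K c" and "finite V"
    and irr: "\<And>x. x \<in> V \<Longrightarrow> \<not> E x x"
    and covers: "\<And>v. v \<in> V \<Longrightarrow> \<exists>u \<in> V. E v u \<and> c {v, u} = j"
  shows "even (card V)"
proof -
  define M where "M = {e \<in> graph_edges V E. c e = j}"
  have M_edges: "M \<subseteq> graph_edges V E" unfolding M_def by blast
  have cover: "\<Union>M = V"
  proof
    show "\<Union>M \<subseteq> V" using M_edges graph_edges_subset_Pow by blast
    show "V \<subseteq> \<Union>M"
    proof
      fix v assume "v \<in> V"
      then obtain u where "u \<in> V" "E v u" "c {v, u} = j" using covers by blast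
      then have "{v, u} \<in> M" unfolding M_def graph_edges_def using \<open>v \<in> V\<close> by blast
      then show "v \<in> \<Union>M" by blast
    qed
  qed
  have card_2: "card e = 2" if "e \<in> M" for e
  proof -
    obtain u v where "e = {u, v}" "u \<in> V" "E u v"
      using \<open>e \<in> M\<close> M_edges by (blast elim: graph_edgesE)
    moreover from this irr have "u \<noteq> v" by blast
    ultimately show ?thesis by simp
  qed
  have "pairwise disjnt M"
    using col unfolding pairwise_def disjnt_def proper_edge_colouring_def M_def by auto
  then have "card (\<Union>M) = (\<Sum>e\<in>M. card e)"
    by (rule card_Union_disjoint) (use card_2 card.infinite in fastforce)
  also have "\<dots> = 2 * card M" using card_2 by simp
  finally show ?thesis using cover by simp
qed

lemma complete_graph_odd_not_colourable:
  assumes "finite V" "odd (card V)" "card V \<ge> 3"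
    and complete: "\<And>u v. u \<in> V \<Longrightarrow> v \<in> V \<Longrightarrow> E u v \<longleftrightarrow> u \<noteq> v"
    and col: "proper_edge_colouring V E (card V - 1) c"
  shows False
proof -
  have irr: "\<not> E x x" if "x \<in> V" for x
    using complete[OF that that] by simp
  have univ: "E v u" if "v \<in> V" "u \<in> V" "u \<noteq> v" for u v
    using complete[OF that(1,2)] that(3) by simp
  have deg: "vertex_degree V E v = card V - 1" if "v \<in> V" for v
    by (rule vertex_degree_universal[of V E v]) (use \<open>finite V\<close> irr that univ in auto)
  have "even (card V)"
  proof (rule even_card_if_colour_class_covers[OF col \<open>finite V\<close> irr])
    fix v assume "v \<in> V"
    have "0 < card V - 1" using \<open>card V \<ge> 3\<close> by simp
    then obtain u where "u \<in> V" "E v u" "c {v, u} = 0"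
      by (rule colour_at_vertex_of_full_degree[OF col \<open>v \<in> V\<close> deg[OF \<open>v \<in> V\<close>]])
    then show "\<exists>u \<in> V. E v u \<and> c {v, u} = 0" by blast
  qed
  then show False using \<open>odd (card V)\<close> by simp
qed

lemma complete_graph_odd_class2:
  assumes "finite V" "odd (card V)" "card V \<ge> 3"
    and complete: "\<And>u v. u \<in> V \<Longrightarrow> v \<in> V \<Longrightarrow> E u v \<longleftrightarrow> u \<noteq> v"
  shows "is_class2 V E"
proof -
  have irr: "\<not> E x x" if "x \<in> V" for x
    using complete[OF that that] by simp
  have sym: "E y x" if "x \<in> V" "y \<in> V" "E x y" for x y
    using complete[OF that(1,2)] complete[OF that(2,1)] that(3) by simp
  have "edge_chromatic_number V E = card V"
    unfolding edge_chromatic_number_def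
  proof (rule Least_equality)
    show "\<exists>c. proper_edge_colouring V E (card V) c"
      by (rule proper_edge_colouring_card[OF \<open>finite V\<close> sym irr])
    fix K assume "\<exists>c. proper_edge_colouring V E K c"
    then obtain c where col: "proper_edge_colouring V E K c" by blast
    show "card V \<le> K"
    proof (rule ccontr)
      assume "\<not> card V \<le> K"
      then have "proper_edge_colouring V E (card V - 1) c"
        using proper_edge_colouring_mono[OF col] by simp
      then show False using complete_graph_odd_not_colourable[of V E c] assms by blast
    qed
  qed
  moreover obtain v where "v \<in> V" using \<open>card V \<ge> 3\<close> by (cases "V = {}") auto
  then have "max_degree V E = card V - 1"
    by (intro max_degree_universal[of V E v])
      (use \<open>finite V\<close> irr complete[OF \<open>v \<in> V\<close>] in auto)
  ultimately show ?thesis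
    unfolding is_class2_def using \<open>card V \<ge> 3\<close> by simp
qed

section \<open>Graphs of order 2k+1 with 2k colours\<close>

definition swap_parity :: "nat \<Rightarrow> nat" where
  "swap_parity s = (if even s then s + 1 else s - 1)"

definition in_window :: "(nat \<Rightarrow> nat) \<Rightarrow> nat \<Rightarrow> nat \<Rightarrow> bool" where
  "in_window l i v \<longleftrightarrow> l i \<le> v \<and> v + l i \<le> 2 * i"

definition apex_colour :: "nat \<Rightarrow> nat \<Rightarrow> nat" where
  "apex_colour k x = 2 * (x mod k) + (if x < k then 1 else 0)"

text \<open>A colouring of the complete graph on the labels 0, ..., 2k with the colours 0, ..., 2k-1
  that is proper except at the k edges from l i to 2i+1 - l i. Below the apex 2k the edge xy gets
  (x + y) mod 2k, which leaves colour 2i free at both i and i+k. The apex takes colour 2i+1 at i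
  and 2i at i+k; to free 2i+1 at i, the colours 2i and 2i+1 are exchanged on all edges inside the
  window from l i to 2i - l i around i. This repairs i but clashes at l i with the edge to
  2i+1 - l i, which therefore has to be a non-edge.\<close>
definition window_colour :: "nat \<Rightarrow> (nat \<Rightarrow> nat) \<Rightarrow> nat \<Rightarrow> nat \<Rightarrow> nat" where
  "window_colour k l x y =
     (if x = 2 * k then apex_colour k y else if y = 2 * k then apex_colour k x
      else let s = (x + y) mod (2 * k)
           in if in_window l (s div 2) x \<and> in_window l (s div 2) y then swap_parity s else s)"

lemma swap_parity_div2 [simp]: "swap_parity s div 2 = s div 2"
  unfolding swap_parity_def by (cases "even s") (auto elim: oddE)

lemma swap_parity_inj: "swap_parity s = swap_parity t \<Longrightarrow> s = t"
  unfolding swap_parity_def by (auto split: if_splits; presburger)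

lemma swap_parity_less: "s < 2 * k \<Longrightarrow> swap_parity s < 2 * k"
  unfolding swap_parity_def by (cases "even s") (auto elim!: evenE)

lemma mod_less_double:
  fixes x n :: nat
  assumes "x < 2 * n"
  shows "x mod n = (if x < n then x else x - n)"
  using assms le_mod_geq[of n x] by simp

lemma div2_eqD: "(s::nat) div 2 = i \<Longrightarrow> s = 2 * i \<or> s = 2 * i + 1"
  by presburger

lemma apex_colour_div2: "k \<ge> 1 \<Longrightarrow> apex_colour k x div 2 = x mod k"
  unfolding apex_colour_def by auto

lemma apex_colour_less: "k \<ge> 1 \<Longrightarrow> apex_colour k x < 2 * k"
  unfolding apex_colour_def using mod_less_divisor[of k x] by auto

lemma apex_colour_inj:
  assumes "k \<ge> 1" "x < 2 * k" "y < 2 * k" "apex_colour k x = apex_colour k y"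
  shows "x = y"
proof -
  have "x mod k = y mod k" using apex_colour_div2[OF assms(1)] assms(4) by metis
  moreover have "x < k \<longleftrightarrow> y < k"
    using arg_cong[OF assms(4), of even] unfolding apex_colour_def by (auto split: if_splits)
  ultimately show ?thesis
    using mod_less_double[OF assms(2)] mod_less_double[OF assms(3)] by (auto split: if_splits)
qed

lemma window_colour_sym: "window_colour k l x y = window_colour k l y x"
  unfolding window_colour_def Let_def by (auto simp: add.commute)

lemma window_colour_less:
  assumes "k \<ge> 1" "x \<le> 2 * k" "y \<le> 2 * k" "x \<noteq> y"
  shows "window_colour k l x y < 2 * k"
proof -
  have "(x + y) mod (2 * k) < 2 * k" using assms(1) by simp
  then show ?thesis
    using assms apex_colour_less swap_parity_less unfolding window_colour_def Let_def by auto
qed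

lemma window_colour_below_apex:
  assumes "x < 2 * k" "y < 2 * k" "s = (x + y) mod (2 * k)"
  shows "window_colour k l x y =
           (if in_window l (s div 2) x \<and> in_window l (s div 2) y then swap_parity s else s)"
  using assms unfolding window_colour_def Let_def by auto

lemma window_colour_div2:
  assumes "x < 2 * k" "y < 2 * k"
  shows "window_colour k l x y div 2 = (x + y) mod (2 * k) div 2"
  using window_colour_below_apex[OF assms refl] by simp

lemma cut_edge_if_leaves_window:
  assumes "i < k" "in_window l i p" "q < 2 * k" "(p + q) mod (2 * k) div 2 = i"
    and "\<not> in_window l i q"
  shows "p = l i \<and> q = 2 * i + 1 - l i"
proof -
  define s where "s = (p + q) mod (2 * k)"
  have "s = 2 * i \<or> s = 2 * i + 1" using assms(4) div2_eqD unfolding s_def by blast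
  moreover have "p \<le> 2 * i" using assms(2) unfolding in_window_def by simp
  moreover have "s = (if p + q < 2 * k then p + q else p + q - 2 * k)"
    unfolding s_def using assms(1,3) \<open>p \<le> 2 * i\<close> by (intro mod_less_double) simp
  ultimately have "p + q = 2 * i \<or> p + q = 2 * i + 1"
    using assms(3) by (auto split: if_splits)
  then show ?thesis using assms(2,5) unfolding in_window_def by auto
qed

lemma add_mod_double_ne:
  fixes p q k :: nat
  assumes "p < 2 * k" "q < 2 * k" "p \<noteq> q"
  shows "(p + q) mod (2 * k) \<noteq> 2 * (p mod k)"
proof
  assume "(p + q) mod (2 * k) = 2 * (p mod k)"
  then have "(p + q) mod (2 * k) = (p + p) mod (2 * k)" by (simp add: mult_mod_right mult_2)
  then show False using mod_add_left_cancel_less[of p q "2 * k" p] assms by simp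
qed

lemma apex_conflict:
  assumes "k \<ge> 1" and l: "\<And>i. i < k \<Longrightarrow> l i \<le> i"
    and "p < 2 * k" "q < 2 * k" "p \<noteq> q"
    and eq: "apex_colour k p = window_colour k l p q"
  shows "\<exists>i<k. p = l i \<and> q = 2 * i + 1 - l i"
proof -
  define i where "i = p mod k"
  define s where "s = (p + q) mod (2 * k)"
  have "i < k" using \<open>k \<ge> 1\<close> by (simp add: i_def)
  have "s div 2 = i"
    using arg_cong[OF eq, of "\<lambda>c. c div 2"] apex_colour_div2[OF \<open>k \<ge> 1\<close>]
      window_colour_div2[OF \<open>p < 2 * k\<close> \<open>q < 2 * k\<close>]
    unfolding s_def i_def by simp
  have "s \<noteq> 2 * i" using add_mod_double_ne[OF assms(3-5)] unfolding s_def i_def .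
  then have s: "s = 2 * i + 1" using div2_eqD \<open>s div 2 = i\<close> by blast
  have colour: "window_colour k l p q =
      (if in_window l i p \<and> in_window l i q then swap_parity s else s)"
    using window_colour_below_apex[OF \<open>p < 2 * k\<close> \<open>q < 2 * k\<close> s_def] \<open>s div 2 = i\<close> by simp
  show ?thesis
  proof (cases "p < k")
    case True
    then have "apex_colour k p = 2 * i + 1" "in_window l i p"
      using l[OF \<open>i < k\<close>] unfolding apex_colour_def in_window_def i_def by auto
    moreover have "swap_parity (2 * i + 1) = 2 * i" unfolding swap_parity_def by simp
    ultimately have "\<not> in_window l i q" using eq colour s by auto
    then show ?thesis
      using cut_edge_if_leaves_window[OF \<open>i < k\<close> \<open>in_window l i p\<close> \<open>q < 2 * k\<close>] \<open>s div 2 = i\<close> \<open>i < k\<close>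
      unfolding s_def by blast
  next
    case False
    then have "apex_colour k p = 2 * i" "p = i + k"
      using mod_less_double[OF \<open>p < 2 * k\<close>] unfolding apex_colour_def i_def by auto
    then have "in_window l i p" using eq colour s by (auto split: if_splits)
    then show ?thesis using \<open>p = i + k\<close> \<open>i < k\<close> unfolding in_window_def by simp
  qed
qed

lemma window_colour_conflict_below_apex:
  assumes l: "\<And>i. i < k \<Longrightarrow> l i \<le> i"
    and "p < 2 * k" "q < 2 * k" "q' < 2 * k" "p \<noteq> q" "p \<noteq> q'" "q \<noteq> q'"
    and eq: "window_colour k l p q = window_colour k l p q'"
  shows "\<exists>i<k. p = l i \<and> (q = 2 * i + 1 - l i \<or> q' = 2 * i + 1 - l i)"
proof -
  define s s' where "s = (p + q) mod (2 * k)" and "s' = (p + q') mod (2 * k)"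
  have "s \<noteq> s'"
    using mod_add_left_cancel_less[of p q "2 * k" q'] assms(3,4,7) unfolding s_def s'_def by blast
  define i where "i = s div 2"
  have "s' div 2 = i"
    using arg_cong[OF eq, of "\<lambda>c. c div 2"] window_colour_div2[OF \<open>p < 2 * k\<close>] assms(3,4)
    unfolding i_def s_def s'_def by simp
  have "s < 2 * k" using \<open>p < 2 * k\<close> unfolding s_def by simp
  then have "i < k" unfolding i_def by presburger
  have col: "window_colour k l p q = (if in_window l i p \<and> in_window l i q then swap_parity s else s)"
    using window_colour_below_apex[OF \<open>p < 2 * k\<close> \<open>q < 2 * k\<close> s_def] unfolding i_def by simp
  have col': "window_colour k l p q' =
      (if in_window l i p \<and> in_window l i q' then swap_parity s' else s')"
    using window_colour_below_apex[OF \<open>p < 2 * k\<close> \<open>q' < 2 * k\<close> s'_def] \<open>s' div 2 = i\<close> by simp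
  have "(in_window l i p \<and> in_window l i q) \<noteq> (in_window l i p \<and> in_window l i q')"
  proof
    assume "(in_window l i p \<and> in_window l i q) = (in_window l i p \<and> in_window l i q')"
    then have "window_colour k l p q \<noteq> window_colour k l p q'"
      using col col' \<open>s \<noteq> s'\<close> swap_parity_inj by (cases "in_window l i p \<and> in_window l i q") auto
    then show False using eq by contradiction
  qed
  then have "in_window l i p" and q_q': "in_window l i q \<noteq> in_window l i q'" by auto
  have div: "(p + q) mod (2 * k) div 2 = i" "(p + q') mod (2 * k) div 2 = i"
    using \<open>s' div 2 = i\<close> unfolding i_def s_def s'_def by simp_all
  then show ?thesis
    using q_q' \<open>i < k\<close> cut_edge_if_leaves_window[OF \<open>i < k\<close> \<open>in_window l i p\<close>] assms(3,4) by blast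
qed

lemma window_colour_conflict:
  assumes "k \<ge> 1" and l: "\<And>i. i < k \<Longrightarrow> l i \<le> i"
    and "p \<le> 2 * k" "q \<le> 2 * k" "q' \<le> 2 * k" "p \<noteq> q" "p \<noteq> q'" "q \<noteq> q'"
    and eq: "window_colour k l p q = window_colour k l p q'"
  shows "\<exists>i<k. p = l i \<and> (q = 2 * i + 1 - l i \<or> q' = 2 * i + 1 - l i)"
proof (cases "p = 2 * k")
  case True
  then have "apex_colour k q = apex_colour k q'" "q < 2 * k" "q' < 2 * k"
    using eq assms(3-8) unfolding window_colour_def by auto
  then show ?thesis using apex_colour_inj[OF \<open>k \<ge> 1\<close>] \<open>q \<noteq> q'\<close> by blast
next
  case False
  then have "p < 2 * k" using \<open>p \<le> 2 * k\<close> by simp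
  consider "q = 2 * k" | "q' = 2 * k" | "q < 2 * k" "q' < 2 * k"
    using assms(4,5) by linarith
  then show ?thesis
  proof cases
    case 1
    then have "apex_colour k p = window_colour k l p q'" "q' < 2 * k"
      using eq False assms(5,8) unfolding window_colour_def by auto
    then show ?thesis using apex_conflict[OF \<open>k \<ge> 1\<close> l \<open>p < 2 * k\<close>] \<open>p \<noteq> q'\<close> by blast
  next
    case 2
    then have "apex_colour k p = window_colour k l p q" "q < 2 * k"
      using eq False assms(4,8) unfolding window_colour_def by auto
    then show ?thesis using apex_conflict[OF \<open>k \<ge> 1\<close> l \<open>p < 2 * k\<close>] \<open>p \<noteq> q\<close> by blast
  next
    case 3
    then show ?thesis
      using window_colour_conflict_below_apex[OF l \<open>p < 2 * k\<close>] assms(6-9) by blast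
  qed
qed

lemma proper_edge_colouring_window_colour:
  assumes "k \<ge> 1" and lab: "bij_betw lab V {0..<2 * k + 1}"
    and sym: "\<And>x y. x \<in> V \<Longrightarrow> y \<in> V \<Longrightarrow> E x y \<Longrightarrow> E y x"
    and irr: "\<And>x. x \<in> V \<Longrightarrow> \<not> E x x"
    and l: "\<And>i. i < k \<Longrightarrow> l i \<le> i"
    and cut: "\<And>i x y. i < k \<Longrightarrow> x \<in> V \<Longrightarrow> y \<in> V \<Longrightarrow> lab x = l i \<Longrightarrow> lab y = 2 * i + 1 - l i
                \<Longrightarrow> \<not> E x y"
  shows "proper_edge_colouring V E (2 * k) (pair_colour (\<lambda>u v. window_colour k l (lab u) (lab v)))"
proof -
  have lab_le: "lab x \<le> 2 * k" if "x \<in> V" for x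
    using bij_betw_apply[OF lab that] by simp
  have lab_eq: "lab x = lab y \<longleftrightarrow> x = y" if "x \<in> V" "y \<in> V" for x y
    using lab that unfolding bij_betw_def inj_on_def by blast
  show ?thesis
  proof (rule proper_edge_colouring_pair_colour)
    show "\<And>x y. x \<in> V \<Longrightarrow> y \<in> V \<Longrightarrow> E x y \<Longrightarrow> E y x" by (rule sym)
    show "\<And>x y. window_colour k l (lab x) (lab y) = window_colour k l (lab y) (lab x)"
      by (rule window_colour_sym)
    fix u v assume "u \<in> V" "v \<in> V" "E u v"
    then have "lab u \<noteq> lab v" using irr lab_eq by metis
    then show "window_colour k l (lab u) (lab v) < 2 * k"
      using window_colour_less[OF \<open>k \<ge> 1\<close>] lab_le \<open>u \<in> V\<close> \<open>v \<in> V\<close> by blast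
  next
    fix w y y' assume "w \<in> V" "y \<in> V" "y' \<in> V" "E w y" "E w y'" "y \<noteq> y'"
    then have "lab w \<noteq> lab y" "lab w \<noteq> lab y'" "lab y \<noteq> lab y'" using irr lab_eq by metis+
    show "window_colour k l (lab w) (lab y) \<noteq> window_colour k l (lab w) (lab y')"
    proof
      assume "window_colour k l (lab w) (lab y) = window_colour k l (lab w) (lab y')"
      then obtain i where "i < k" "lab w = l i"
          and "lab y = 2 * i + 1 - l i \<or> lab y' = 2 * i + 1 - l i"
        using window_colour_conflict[OF \<open>k \<ge> 1\<close> l] lab_le \<open>w \<in> V\<close> \<open>y \<in> V\<close> \<open>y' \<in> V\<close>
          \<open>lab w \<noteq> lab y\<close> \<open>lab w \<noteq> lab y'\<close> \<open>lab y \<noteq> lab y'\<close> by meson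
      then show False using cut \<open>w \<in> V\<close> \<open>y \<in> V\<close> \<open>y' \<in> V\<close> \<open>E w y\<close> \<open>E w y'\<close> by blast
    qed
  qed
qed

lemma odd_card_colouring_from_label_sums:
  assumes "k \<ge> 1" and lab: "bij_betw lab V {0..<2 * k + 1}"
    and sym: "\<And>x y. x \<in> V \<Longrightarrow> y \<in> V \<Longrightarrow> E x y \<Longrightarrow> E y x"
    and irr: "\<And>x. x \<in> V \<Longrightarrow> \<not> E x x"
    and nonadj: "\<And>i. i < k \<Longrightarrow> \<exists>x\<in>V. \<exists>y\<in>V. \<not> E x y \<and> lab x + lab y = 2 * i + 1"
  shows "\<exists>c. proper_edge_colouring V E (2 * k) c"
proof -
  have "\<exists>x\<in>V. \<exists>y\<in>V. \<not> E x y \<and> lab x \<le> i \<and> lab x + lab y = 2 * i + 1" if i: "i < k" for i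
  proof -
    obtain x y where xy: "x \<in> V" "y \<in> V" "\<not> E x y" "lab x + lab y = 2 * i + 1"
      using nonadj[OF i] by blast
    show ?thesis
    proof (cases "lab x \<le> i")
      case True
      then show ?thesis using xy by blast
    next
      case False
      then have "lab y \<le> i" using xy(4) by simp
      moreover have "\<not> E y x" using sym xy(1-3) by blast
      ultimately show ?thesis using xy by (metis add.commute)
    qed
  qed
  then obtain X Y where XY: "\<And>i. i < k \<Longrightarrow> X i \<in> V \<and> Y i \<in> V \<and> \<not> E (X i) (Y i)
      \<and> lab (X i) \<le> i \<and> lab (X i) + lab (Y i) = 2 * i + 1"
    by metis
  define l where "l i = lab (X i)" for i
  have "\<not> E w y" if "i < k" "w \<in> V" "y \<in> V" "lab w = l i" "lab y = 2 * i + 1 - l i" for i w y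
  proof -
    have "lab w = lab (X i)" "lab y = lab (Y i)" using that XY[OF \<open>i < k\<close>] unfolding l_def by auto
    then have "w = X i" "y = Y i"
      using that(2,3) XY[OF \<open>i < k\<close>] lab unfolding bij_betw_def inj_on_def by blast+
    then show ?thesis using XY[OF \<open>i < k\<close>] by blast
  qed
  moreover have "l i \<le> i" if "i < k" for i using XY[OF that] unfolding l_def by simp
  ultimately show ?thesis
    using proper_edge_colouring_window_colour[of k lab V E, OF \<open>k \<ge> 1\<close> lab sym irr] by blast
qed

lemma ex_bij_betw_extension:
  assumes f: "bij_betw f A A'" and "A \<subseteq> B" "A' \<subseteq> B'" "finite B" "finite B'" "card B' = card B"
  obtains g where "bij_betw g B B'" "\<And>x. x \<in> A \<Longrightarrow> g x = f x"
proof -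
  have "finite A" "finite A'" using assms(2-5) by (meson finite_subset)+
  have "card A' = card A" using bij_betw_same_card[OF f] by simp
  then have "card (B - A) = card (B' - A')"
    using assms(2,3,6) \<open>finite A\<close> \<open>finite A'\<close> by (simp add: card_Diff_subset)
  moreover have "finite (B - A)" "finite (B' - A')" using assms(4,5) by auto
  ultimately obtain h where h: "bij_betw h (B - A) (B' - A')"
    using finite_same_card_bij by blast
  define g where "g x = (if x \<in> A then f x else h x)" for x
  have "bij_betw g (A \<union> (B - A)) (A' \<union> (B' - A'))"
  proof (rule bij_betw_combine)
    show "bij_betw g A A'" using f by (rule bij_betw_cong[THEN iffD1, rotated]) (simp add: g_def)
    show "bij_betw g (B - A) (B' - A')" using h by (rule bij_betw_cong[THEN iffD1, rotated]) (simp add: g_def)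
    show "A' \<inter> (B' - A') = {}" by blast
  qed
  moreover have "A \<union> (B - A) = B" "A' \<union> (B' - A') = B'" using assms(2,3) by auto
  ultimately show thesis using that g_def by simp
qed

lemma ex_bij_betw_two_blocks:
  assumes "finite B" "finite B'" "card B' = card B"
    and "A1 \<subseteq> B" "A2 \<subseteq> B" "A1 \<inter> A2 = {}" "A1' \<subseteq> B'" "A2' \<subseteq> B'" "A1' \<inter> A2' = {}"
    and "card A1' = card A1" "card A2' = card A2"
  obtains g where "bij_betw g B B'" "g ` A1 = A1'" "g ` A2 = A2'"
proof -
  have fin: "finite A1" "finite A2" "finite A1'" "finite A2'"
    using assms(1,2,4,5,7,8) by (meson finite_subset)+
  obtain f1 where f1: "bij_betw f1 A1 A1'" using finite_same_card_bij fin assms(10) by metis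
  obtain f2 where f2: "bij_betw f2 A2 A2'" using finite_same_card_bij fin assms(11) by metis
  define f where "f x = (if x \<in> A1 then f1 x else f2 x)" for x
  have "bij_betw f A1 A1'" using f1 by (rule bij_betw_cong[THEN iffD1, rotated]) (simp add: f_def)
  moreover have "bij_betw f A2 A2'"
    using f2 assms(6) by (intro bij_betw_cong[THEN iffD1, OF _ f2]) (auto simp: f_def)
  ultimately have "bij_betw f (A1 \<union> A2) (A1' \<union> A2')" using assms(9) by (rule bij_betw_combine)
  then obtain g where g: "bij_betw g B B'" and "\<And>x. x \<in> A1 \<union> A2 \<Longrightarrow> g x = f x"
    using ex_bij_betw_extension assms(1-5,7,8) by (metis Un_least)
  then have "g ` A1 = f ` A1" "g ` A2 = f ` A2" by (auto intro: image_cong)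
  then show thesis
    using that g \<open>bij_betw f A1 A1'\<close> \<open>bij_betw f A2 A2'\<close> by (simp add: bij_betw_def)
qed

lemma block_label_less:
  fixes j k s :: nat
  assumes "j < (k - 1) div s + 1"
  shows "2 * j * s < 2 * k + 1"
proof -
  have "j * s \<le> k - 1"
    using assms div_times_less_eq_dividend[of "k - 1" s] mult_le_mono1[of j "(k - 1) div s" s] by linarith
  then show ?thesis by (simp add: mult.assoc)
qed

lemma block_label_sum:
  fixes i k s :: nat
  assumes "i < k"
  shows "i div s < (k - 1) div s + 1" and "2 * (i mod s) + 1 + 2 * (i div s) * s = 2 * i + 1"
proof -
  have "i \<le> k - 1" using assms by simp
  then show "i div s < (k - 1) div s + 1" using div_le_mono[of i "k - 1" s] by simp
  have "2 * (i mod s) + 2 * (i div s) * s = 2 * (i mod s + i div s * s)"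
    by (simp only: distrib_left mult.assoc)
  then show "2 * (i mod s) + 1 + 2 * (i div s) * s = 2 * i + 1" by simp
qed

text \<open>The labels 2a+1 (a < |S|) go to S and the labels 2j|S| (j < |T|) to T, so that every
  odd number 2i+1 < 2k is the label sum of a pair in S \<times> T.\<close>
lemma odd_card_colouring_from_nonadjacent_blocks:
  assumes "finite V" "card V = 2 * k + 1" "k \<ge> 1"
    and sym: "\<And>x y. x \<in> V \<Longrightarrow> y \<in> V \<Longrightarrow> E x y \<Longrightarrow> E y x"
    and irr: "\<And>x. x \<in> V \<Longrightarrow> \<not> E x x"
    and "S \<subseteq> V" "T \<subseteq> V" "S \<inter> T = {}" and nonadj: "\<And>x y. x \<in> S \<Longrightarrow> y \<in> T \<Longrightarrow> \<not> E x y"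
    and "1 \<le> card S" "card S \<le> k" and card_T: "card T = (k - 1) div card S + 1"
  shows "\<exists>c. proper_edge_colouring V E (2 * k) c"
proof -
  define s where "s = card S"
  define LS LT where "LS = (\<lambda>a. 2 * a + 1) ` {..<s}" and "LT = (\<lambda>j. 2 * j * s) ` {..<card T}"
  have "s \<noteq> 0" using assms(10) unfolding s_def by simp
  have LS: "LS \<subseteq> {0..<2 * k + 1}" using assms(11) unfolding LS_def s_def by auto
  have LT: "LT \<subseteq> {0..<2 * k + 1}" using block_label_less card_T unfolding LT_def s_def by auto
  have "odd x" if "x \<in> LS" for x using that unfolding LS_def by auto
  moreover have "even x" if "x \<in> LT" for x using that unfolding LT_def by auto
  ultimately have disj: "LS \<inter> LT = {}" by blast
  have "card LS = card S" unfolding LS_def s_def by (simp add: card_image inj_on_def)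
  moreover have "card LT = card T" unfolding LT_def using \<open>s \<noteq> 0\<close> by (simp add: card_image inj_on_def)
  moreover have "card {0..<2 * k + 1} = card V" using assms(2) by simp
  ultimately obtain lab where lab: "bij_betw lab V {0..<2 * k + 1}" "lab ` S = LS" "lab ` T = LT"
    using ex_bij_betw_two_blocks[OF \<open>finite V\<close> finite_atLeastLessThan _ assms(6-8) LS LT disj] by metis
  show ?thesis
  proof (rule odd_card_colouring_from_label_sums[OF \<open>k \<ge> 1\<close> lab(1) sym irr])
    fix i assume "i < k"
    then have "2 * (i mod s) + 1 \<in> lab ` S" "2 * (i div s) * s \<in> lab ` T"
      using block_label_sum(1)[OF \<open>i < k\<close>, of s] \<open>s \<noteq> 0\<close> card_T
      unfolding lab(2,3) LS_def LT_def s_def by auto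
    then obtain x y where xy: "x \<in> S" "y \<in> T" "lab x = 2 * (i mod s) + 1" "lab y = 2 * (i div s) * s"
      by (metis imageE)
    then have "lab x + lab y = 2 * i + 1" using block_label_sum(2)[OF \<open>i < k\<close>, of s] by simp
    then show "\<exists>x\<in>V. \<exists>y\<in>V. \<not> E x y \<and> lab x + lab y = 2 * i + 1"
      using xy(1,2) nonadj assms(6,7) by blast
  qed
qed

lemma odd_card_colouring_from_nonadjacent_sets:
  assumes "finite V" "card V = 2 * k + 1" "k \<ge> 1"
    and sym: "\<And>x y. x \<in> V \<Longrightarrow> y \<in> V \<Longrightarrow> E x y \<Longrightarrow> E y x"
    and irr: "\<And>x. x \<in> V \<Longrightarrow> \<not> E x x"
    and "S \<subseteq> V" "T \<subseteq> V" "S \<inter> T = {}" and nonadj: "\<And>x y. x \<in> S \<Longrightarrow> y \<in> T \<Longrightarrow> \<not> E x y"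
    and "k \<le> card S * card T"
  shows "\<exists>c. proper_edge_colouring V E (2 * k) c"
proof -
  define s where "s = min (card S) k"
  define q where "q = (k - 1) div s + 1"
  have "card S * card T \<noteq> 0" using assms(3,10) by linarith
  then have "card S \<noteq> 0" "card T \<noteq> 0" by simp_all
  then have "1 \<le> s" "s \<le> k" "s \<le> card S" using assms(3) unfolding s_def by auto
  have "k \<le> s * card T" using assms(10) \<open>card T \<noteq> 0\<close> unfolding s_def by (cases "card S \<le> k") auto
  then have "(k - 1) div s < card T"
    using div_less_iff_less_mult[of s "k - 1" "card T"] \<open>1 \<le> s\<close> assms(3) by (simp add: mult.commute)
  then have "q \<le> card T" unfolding q_def by simp
  obtain S' where "S' \<subseteq> S" "card S' = s" using obtain_subset_with_card_n[OF \<open>s \<le> card S\<close>] by blast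
  obtain T' where "T' \<subseteq> T" "card T' = q" using obtain_subset_with_card_n[OF \<open>q \<le> card T\<close>] by blast
  show ?thesis
  proof (rule odd_card_colouring_from_nonadjacent_blocks[OF assms(1-3) sym irr])
    show "S' \<subseteq> V" "T' \<subseteq> V" "S' \<inter> T' = {}"
      using assms(6-8) \<open>S' \<subseteq> S\<close> \<open>T' \<subseteq> T\<close> by auto
    show "\<And>x y. x \<in> S' \<Longrightarrow> y \<in> T' \<Longrightarrow> \<not> E x y"
      using nonadj \<open>S' \<subseteq> S\<close> \<open>T' \<subseteq> T\<close> by blast
    show "1 \<le> card S'" "card S' \<le> k" "card T' = (k - 1) div card S' + 1"
      using \<open>card S' = s\<close> \<open>card T' = q\<close> \<open>1 \<le> s\<close> \<open>s \<le> k\<close> unfolding q_def by simp_all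
  qed
qed

section \<open>Power graphs\<close>

lemma prime_power_divisors_comparable:
  fixes d d' :: int
  assumes "prime p" "d \<ge> 0" "d' \<ge> 0" "d dvd int (p ^ a)" "d' dvd int (p ^ a)"
  shows "d dvd d' \<or> d' dvd d"
proof -
  have "nat d dvd p ^ a" "nat d' dvd p ^ a" using assms
    by (metis nat_dvd_iff nat_int zero_le_imp_eq_int)+
  then obtain u v where "nat d = p ^ u" "nat d' = p ^ v"
    using divides_primepow_nat[OF \<open>prime p\<close>] by blast
  then have "nat d dvd nat d' \<or> nat d' dvd nat d"
    by (metis le_cases le_imp_power_dvd)
  then show ?thesis using assms(2,3) by (metis int_dvd_int_iff int_nat_eq)
qed

lemma odd_non_prime_power_split:
  fixes n :: nat
  assumes "odd n" "n \<ge> 3" "\<not> (\<exists>p a. prime p \<and> a \<ge> 1 \<and> n = p ^ a)"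
  obtains A B where "n = A * B" "coprime A B" "A \<ge> 3" "B \<ge> 3"
proof -
  obtain p where p: "prime p" "p dvd n" using prime_factor_nat[of n] assms(2) by auto
  have "n \<noteq> 0" using assms(2) by simp
  have "\<not> is_unit p" using p(1) by (metis not_prime_unit)
  define e where "e = multiplicity p n"
  obtain m where m: "n = p ^ e * m" "\<not> p dvd m"
    using multiplicity_decompose'[OF \<open>n \<noteq> 0\<close> \<open>\<not> is_unit p\<close>] unfolding e_def by metis
  have "e \<ge> 1"
    using multiplicity_gt_zero_iff[OF \<open>n \<noteq> 0\<close> \<open>\<not> is_unit p\<close>] p(2) unfolding e_def by simp
  have "coprime (p ^ e) m" using p m(2) by (simp add: prime_imp_coprime coprime_power_left_iff)
  have "m \<noteq> 1"
  proof
    assume "m = 1"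
    then have "n = p ^ e" using m(1) by simp
    then show False using assms(3) p(1) \<open>e \<ge> 1\<close> by blast
  qed
  moreover have "odd m" using assms(1) m(1) by simp
  ultimately have "m \<ge> 3" by presburger
  have "p \<le> p ^ e"
    using power_increasing[of 1 e p] \<open>e \<ge> 1\<close> prime_gt_0_nat[OF p(1)] by simp
  moreover have "odd (p ^ e)" using assms(1) m(1) by simp
  moreover have "p \<ge> 2" using p by (simp add: prime_ge_2_nat)
  ultimately have "p ^ e \<ge> 3" by presburger
  then show thesis using that m(1) \<open>coprime (p ^ e) m\<close> \<open>m \<ge> 3\<close> by blast
qed

lemma nat_one_even_odd_cases:
  fixes n :: nat
  assumes "n \<ge> 1"
  obtains "n = 1" | "even n" "n \<ge> 2" | k where "n = 2 * k + 1" "k \<ge> 1"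
proof (cases "even n")
  case True
  then have "n \<ge> 2" using assms by presburger
  then show thesis using that(2) True by blast
next
  case False
  then obtain k where "n = 2 * k + 1" by (rule oddE)
  then show thesis using that(1,3) by (cases "k = 0") auto
qed

lemma half_le_mult_pred:
  fixes A B k :: nat
  assumes "A \<ge> 3" "B \<ge> 3" "A * B = 2 * k + 1"
  shows "k \<le> (A - 1) * (B - 1)"
proof -
  obtain a b where "A = a + 3" "B = b + 3" using assms(1,2) by (metis add.commute le_Suc_ex)
  with assms(3) show ?thesis by (simp add: algebra_simps)
qed

lemma power_adj_sym: "power_adj G x y \<Longrightarrow> power_adj G y x"
  unfolding power_adj_def by auto

lemma power_adj_irrefl: "\<not> power_adj G x x"
  unfolding power_adj_def by simp

context group
begin

lemma power_adj_one:
  assumes "x \<in> carrier G" "x \<noteq> \<one>"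
  shows "power_adj G \<one> x"
proof -
  have "\<one> = x [^] (0::int)" by simp
  then show ?thesis unfolding power_adj_def using assms by blast
qed

lemma power_adj_imp_generate_subset:
  assumes "x \<in> carrier G" "y \<in> carrier G" "power_adj G x y"
  shows "generate G {x} \<subseteq> generate G {y} \<or> generate G {y} \<subseteq> generate G {x}"
proof -
  have "generate G {u} \<subseteq> generate G {v}" if "u = v [^] (n::int)" "v \<in> carrier G" for u v n
    using that generate_pow[of v] generate_is_subgroup[of "{v}"]
    by (intro generate_subgroup_incl) auto
  then show ?thesis using assms unfolding power_adj_def by blast
qed

lemma ord_generator:
  assumes "g \<in> carrier G" "carrier G = range (\<lambda>n::int. g [^] n)"
  shows "ord g = order G"
proof -
  have "generate G {g} = carrier G" using generate_pow[OF assms(1)] assms(2) by auto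
  then show ?thesis using generate_pow_card[OF assms(1)] unfolding order_def by simp
qed

lemma int_pow_eq_int_pow_pow_if_gcd_dvd:
  assumes "g \<in> carrier G" "gcd i (int (ord g)) dvd j"
  shows "\<exists>m::int. g [^] j = (g [^] i) [^] m"
proof -
  define N where "N = int (ord g)"
  obtain s t where st: "s * i + t * N = gcd i N" using bezout_int by blast
  obtain r where "j = gcd i N * r" using assms(2) unfolding N_def by (auto elim: dvdE)
  then have "j = (s * i + t * N) * r" using st by simp
  then have "i * (s * r) - j = - (t * N * r)" by (simp add: algebra_simps)
  then have "N dvd i * (s * r) - j" by simp
  then have "g [^] j = g [^] (i * (s * r))" using int_pow_eq[OF assms(1)] unfolding N_def by simp
  also have "\<dots> = (g [^] i) [^] (s * r)" using int_pow_pow[OF assms(1)] by simp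
  finally show ?thesis by blast
qed

lemma power_adj_cyclic_prime_power:
  assumes "cyclic_group G" "prime p" "order G = p ^ a"
    and "x \<in> carrier G" "y \<in> carrier G" "x \<noteq> y"
  shows "power_adj G x y"
proof -
  obtain g where g: "g \<in> carrier G" and gen: "carrier G = range (\<lambda>n::int. g [^] n)"
    using assms(1) cyclic_group by blast
  obtain i j where ij: "x = g [^] (i::int)" "y = g [^] (j::int)" using assms(4,5) gen by auto
  define N where "N = int (ord g)"
  have "N = int (p ^ a)" using ord_generator[OF g gen] assms(3) unfolding N_def by simp
  then have "gcd i N dvd gcd j N \<or> gcd j N dvd gcd i N"
    by (intro prime_power_divisors_comparable[OF assms(2), of _ _ a]) simp_all
  then have "gcd i N dvd j \<or> gcd j N dvd i" by (meson dvd_trans gcd_dvd1)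
  then have "(\<exists>m::int. y = x [^] m) \<or> (\<exists>m::int. x = y [^] m)"
    using int_pow_eq_int_pow_pow_if_gcd_dvd[OF g] ij unfolding N_def by blast
  then show ?thesis unfolding power_adj_def using assms(6) by blast
qed

lemma eq_one_if_pow_coprime:
  assumes "z \<in> carrier G" "z [^] (A::nat) = \<one>" "z [^] (B::nat) = \<one>" "coprime A B"
  shows "z = \<one>"
proof -
  have "ord z dvd A" "ord z dvd B" using assms(1-3) pow_eq_id by auto
  then have "ord z dvd gcd A B" by simp
  then have "ord z = 1" using assms(4) by simp
  then show ?thesis using ord_eq_1[OF assms(1)] by simp
qed

lemma int_pow_pow_eq_one:
  assumes "x \<in> carrier G" "x [^] (A::nat) = \<one>"
  shows "(x [^] (m::int)) [^] A = \<one>"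
proof -
  have "(x [^] m) [^] (int A) = (x [^] (int A)) [^] m"
    using int_pow_pow[OF assms(1)] by (simp add: mult.commute)
  then show ?thesis using assms(2) by (simp add: int_pow_int)
qed

lemma not_power_adj_if_coprime_exponents:
  assumes "x \<in> carrier G" "y \<in> carrier G" "x [^] (A::nat) = \<one>" "y [^] (B::nat) = \<one>"
    and "coprime A B" "x \<noteq> \<one>" "y \<noteq> \<one>"
  shows "\<not> power_adj G x y"
proof
  assume "power_adj G x y"
  then consider (pow_x) m where "y = x [^] (m::int)" | (pow_y) m where "x = y [^] (m::int)"
    unfolding power_adj_def by blast
  then show False
  proof cases
    case pow_x
    then have "y [^] A = \<one>" using int_pow_pow_eq_one[OF assms(1,3)] by simp
    then show False using eq_one_if_pow_coprime[OF assms(2) _ assms(4,5)] assms(7) by blast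
  next
    case pow_y
    then have "x [^] B = \<one>" using int_pow_pow_eq_one[OF assms(2,4)] by simp
    then show False using eq_one_if_pow_coprime[OF assms(1,3) _ assms(5)] assms(6) by blast
  qed
qed

lemma card_proper_subgroup_le_half:
  assumes "finite (carrier G)" "subgroup H G" "H \<noteq> carrier G"
  shows "2 * card H \<le> order G"
proof -
  have index: "card (rcosets H) * card H = order G" by (rule lagrange[OF assms(2)])
  have "card H < order G"
    using assms subgroup.subset[OF assms(2)] unfolding order_def by (simp add: psubset_card_mono psubsetI)
  have "card (rcosets H) \<noteq> 0"
  proof
    assume "card (rcosets H) = 0"
    then show False using index \<open>card H < order G\<close> by simp
  qed
  moreover have "card (rcosets H) \<noteq> 1" using index \<open>card H < order G\<close> by auto
  ultimately have "2 * card H \<le> card (rcosets H) * card H" by (intro mult_le_mono1) linarith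
  then show ?thesis using index by simp
qed

lemma noncyclic_nonadjacent_set:
  assumes "finite (carrier G)" "\<not> cyclic_group G"
  obtains g Y where "g \<in> carrier G" "Y \<subseteq> carrier G" "g \<notin> Y" "order G \<le> 2 * card Y"
    and "\<And>y. y \<in> Y \<Longrightarrow> \<not> power_adj G g y"
proof -
  have "Max (ord ` carrier G) \<in> ord ` carrier G" using assms(1) by (intro Max_in) auto
  then obtain g where g: "g \<in> carrier G" "ord g = Max (ord ` carrier G)" by auto
  then have ord_le: "ord x \<le> ord g" if "x \<in> carrier G" for x using assms(1) that by simp
  define H where "H = generate G {g}"
  have H: "subgroup H G" unfolding H_def using g(1) by (simp add: generate_is_subgroup)
  have "H \<noteq> carrier G"
  proof
    assume "H = carrier G"
    then have "carrier G = range (\<lambda>n::int. g [^] n)" using generate_pow[OF g(1)] unfolding H_def by blast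
    then show False using assms(2) g(1) cyclic_group by blast
  qed
  then have "order G \<le> 2 * card (carrier G - H)"
    using card_proper_subgroup_le_half[OF assms(1) H] subgroup.subset[OF H] assms(1)
    unfolding order_def by (simp add: card_Diff_subset finite_subset)
  moreover have "\<not> power_adj G g y" if "y \<in> carrier G - H" for y
  proof
    assume "power_adj G g y"
    then have "H \<subseteq> generate G {y} \<or> generate G {y} \<subseteq> H"
      using power_adj_imp_generate_subset g(1) that unfolding H_def by blast
    moreover have "card (generate G {y}) \<le> card H"
      using ord_le that generate_pow_card g(1) unfolding H_def by auto
    moreover have "finite (generate G {y})"
      using assms(1) that generate_is_subgroup[of "{y}"] subgroup.subset finite_subset by blast
    ultimately have "generate G {y} \<subseteq> H" using card_seteq by blast
    then show False using that generate.incl[of y "{y}" G] by blast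
  qed
  moreover have "g \<notin> carrier G - H" using g(1) generate.incl[of g "{g}" G] unfolding H_def by blast
  ultimately show thesis using that g(1) by blast
qed

lemma pow_multiples_of_ord:
  assumes "g \<in> carrier G" "ord g = A * B" "0 < B"
  shows "card ((\<lambda>j. g [^] (B * j)) ` {1..<A}) = A - 1"
    and "x \<in> (\<lambda>j. g [^] (B * j)) ` {1..<A} \<Longrightarrow> x [^] A = \<one> \<and> x \<noteq> \<one>"
proof -
  have small: "B * i \<le> ord g - 1" if "i < A" for i
  proof -
    have "i \<le> A - 1" using that by linarith
    then have "B * i \<le> B * (A - 1)" by simp
    also have "\<dots> = ord g - B" using assms(2) by (simp add: algebra_simps diff_mult_distrib2)
    finally show ?thesis using assms(3) by linarith
  qed
  have "inj_on (\<lambda>j. g [^] (B * j)) {1..<A}"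
  proof (rule inj_onI)
    fix i j assume "i \<in> {1..<A}" "j \<in> {1..<A}" and eq: "g [^] (B * i) = g [^] (B * j)"
    then have "B * i \<in> {0..ord g - 1}" "B * j \<in> {0..ord g - 1}" using small by auto
    then have "B * i = B * j" using inj_onD[OF ord_inj[OF assms(1)] eq] by blast
    then show "i = j" using assms(3) by simp
  qed
  then show "card ((\<lambda>j. g [^] (B * j)) ` {1..<A}) = A - 1" by (simp add: card_image)
next
  assume "x \<in> (\<lambda>j. g [^] (B * j)) ` {1..<A}"
  then obtain j where j: "j \<in> {1..<A}" "x = g [^] (B * j)" by auto
  have "x [^] A = g [^] (A * B * j)" using j assms(1) by (simp add: nat_pow_pow algebra_simps)
  then have "x [^] A = \<one>" using pow_eq_id[OF assms(1)] assms(2) by simp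
  moreover have "x \<noteq> \<one>"
  proof
    assume "x = \<one>"
    then have "A * B dvd B * j" using pow_eq_id[OF assms(1)] assms(2) j(2) by simp
    then have "A dvd j" using assms(3) by (simp add: mult.commute)
    then show False using j(1) by (auto dest: dvd_imp_le)
  qed
  ultimately show "x [^] A = \<one> \<and> x \<noteq> \<one>" by blast
qed

lemma cyclic_nonadjacent_sets:
  assumes "finite (carrier G)" "cyclic_group G" "order G = A * B" "coprime A B"
  obtains S T where "S \<subseteq> carrier G" "T \<subseteq> carrier G" "S \<inter> T = {}"
    and "card S = A - 1" "card T = B - 1" "\<And>x y. x \<in> S \<Longrightarrow> y \<in> T \<Longrightarrow> \<not> power_adj G x y"
proof -
  obtain g where g: "g \<in> carrier G" and gen: "carrier G = range (\<lambda>n::int. g [^] n)"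
    using assms(2) cyclic_group by blast
  have "ord g = A * B" "ord g = B * A" using ord_generator[OF g gen] assms(3) by simp_all
  moreover have "0 < A" "0 < B" using assms(1,3) order_gt_0_iff_finite by auto
  ultimately have S: "card ((\<lambda>j. g [^] (B * j)) ` {1..<A}) = A - 1"
      "\<And>x. x \<in> (\<lambda>j. g [^] (B * j)) ` {1..<A} \<Longrightarrow> x [^] A = \<one> \<and> x \<noteq> \<one>"
    and T: "card ((\<lambda>j. g [^] (A * j)) ` {1..<B}) = B - 1"
      "\<And>y. y \<in> (\<lambda>j. g [^] (A * j)) ` {1..<B} \<Longrightarrow> y [^] B = \<one> \<and> y \<noteq> \<one>"
    using pow_multiples_of_ord[OF g \<open>ord g = A * B\<close> \<open>0 < B\<close>]
      pow_multiples_of_ord[OF g \<open>ord g = B * A\<close> \<open>0 < A\<close>] by blast+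
  show thesis
  proof (rule that[OF _ _ _ S(1) T(1)])
    show "(\<lambda>j. g [^] (B * j)) ` {1..<A} \<subseteq> carrier G" "(\<lambda>j. g [^] (A * j)) ` {1..<B} \<subseteq> carrier G"
      using g by auto
    then show "(\<lambda>j. g [^] (B * j)) ` {1..<A} \<inter> (\<lambda>j. g [^] (A * j)) ` {1..<B} = {}"
      using S(2) T(2) eq_one_if_pow_coprime[OF _ _ _ assms(4)] by blast
    show "\<And>x y. x \<in> (\<lambda>j. g [^] (B * j)) ` {1..<A} \<Longrightarrow> y \<in> (\<lambda>j. g [^] (A * j)) ` {1..<B}
            \<Longrightarrow> \<not> power_adj G x y"
      using S(2) T(2) not_power_adj_if_coprime_exponents[OF _ _ _ _ assms(4)] g by blast
  qed
qed

lemma power_graph_nonadjacent_sets: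
  assumes "finite (carrier G)" "order G = 2 * k + 1" "k \<ge> 1"
    and "\<not> (cyclic_group G \<and> (\<exists>p a. prime p \<and> a \<ge> 1 \<and> order G = p ^ a))"
  obtains S T where "S \<subseteq> carrier G" "T \<subseteq> carrier G" "S \<inter> T = {}"
    and "\<And>x y. x \<in> S \<Longrightarrow> y \<in> T \<Longrightarrow> \<not> power_adj G x y" "k \<le> card S * card T"
proof (cases "cyclic_group G")
  case False
  then obtain g Y where "g \<in> carrier G" "Y \<subseteq> carrier G" "g \<notin> Y" "order G \<le> 2 * card Y"
    and "\<And>y. y \<in> Y \<Longrightarrow> \<not> power_adj G g y"
    using noncyclic_nonadjacent_set[OF assms(1)] by blast
  then show thesis using that[of "{g}" Y] assms(2) by auto
next
  case True
  then have "\<not> (\<exists>p a. prime p \<and> a \<ge> 1 \<and> order G = p ^ a)" using assms(4) by blast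
  moreover have "odd (order G)" "order G \<ge> 3" using assms(2,3) by simp_all
  ultimately obtain A B where AB: "order G = A * B" "coprime A B" "A \<ge> 3" "B \<ge> 3"
    using odd_non_prime_power_split[of "order G"] by blast
  then obtain S T where "S \<subseteq> carrier G" "T \<subseteq> carrier G" "S \<inter> T = {}"
    and "card S = A - 1" "card T = B - 1" "\<And>x y. x \<in> S \<Longrightarrow> y \<in> T \<Longrightarrow> \<not> power_adj G x y"
    using cyclic_nonadjacent_sets[OF assms(1) True] by blast
  moreover have "k \<le> (A - 1) * (B - 1)" using half_le_mult_pred[OF AB(3,4)] AB(1) assms(2) by simp
  ultimately show thesis using that by simp
qed

lemma power_graph_colouring_odd_order:
  assumes "finite (carrier G)" "order G = 2 * k + 1" "k \<ge> 1"
    and "\<not> (cyclic_group G \<and> (\<exists>p a. prime p \<and> a \<ge> 1 \<and> order G = p ^ a))"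
  shows "\<exists>c. proper_edge_colouring (carrier G) (power_adj G) (2 * k) c"
proof -
  obtain S T where "S \<subseteq> carrier G" "T \<subseteq> carrier G" "S \<inter> T = {}"
    and "\<And>x y. x \<in> S \<Longrightarrow> y \<in> T \<Longrightarrow> \<not> power_adj G x y" "k \<le> card S * card T"
    using power_graph_nonadjacent_sets[OF assms] by blast
  then show ?thesis
    using odd_card_colouring_from_nonadjacent_sets[of "carrier G" k "power_adj G" S T,
        OF assms(1) _ \<open>k \<ge> 1\<close> power_adj_sym power_adj_irrefl] assms(2)
    unfolding order_def by blast
qed

lemma power_graph_colouring:
  assumes "finite (carrier G)"
    and "\<not> (cyclic_group G \<and> (\<exists>p a. prime p \<and> odd p \<and> a \<ge> 1 \<and> order G = p ^ a))"
  shows "\<exists>c. proper_edge_colouring (carrier G) (power_adj G) (order G - 1) c"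
proof -
  have "order G \<ge> 1" using assms(1) order_gt_0_iff_finite by simp
  then show ?thesis
  proof (cases rule: nat_one_even_odd_cases)
    case 1
    then have "carrier G = {\<one>}" using one_closed unfolding order_def by (metis card_1_singletonE singletonD)
    then have "graph_edges (carrier G) (power_adj G) = {}"
      unfolding graph_edges_def by (auto simp: power_adj_irrefl)
    then show ?thesis unfolding proper_edge_colouring_def by simp
  next
    case 2
    then show ?thesis
      using proper_edge_colouring_even_card[of "carrier G" "power_adj G",
          OF assms(1) _ _ power_adj_sym power_adj_irrefl]
      unfolding order_def by simp
  next
    case (3 k)
    then have "odd (order G)" by simp
    then have "odd p" if "a \<ge> 1" "order G = p ^ a" for p a :: nat
      using that by (simp add: even_power)
    then have "\<not> (cyclic_group G \<and> (\<exists>p a. prime p \<and> a \<ge> 1 \<and> order G = p ^ a))"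
      using assms(2) by blast
    then have "\<exists>c. proper_edge_colouring (carrier G) (power_adj G) (2 * k) c"
      by (rule power_graph_colouring_odd_order[OF assms(1) 3])
    then show ?thesis using 3(1) by simp
  qed
qed

lemma power_graph_not_class2:
  assumes "finite (carrier G)"
    and "\<not> (cyclic_group G \<and> (\<exists>p a. prime p \<and> odd p \<and> a \<ge> 1 \<and> order G = p ^ a))"
  shows "\<not> is_class2 (carrier G) (power_adj G)"
proof -
  obtain c where col: "proper_edge_colouring (carrier G) (power_adj G) (card (carrier G) - 1) c"
    using power_graph_colouring[OF assms] unfolding order_def by blast
  have irr: "\<And>x. x \<in> carrier G \<Longrightarrow> \<not> power_adj G x x" by (rule power_adj_irrefl)
  have univ: "\<And>u. u \<in> carrier G \<Longrightarrow> u \<noteq> \<one> \<Longrightarrow> power_adj G \<one> u" by (rule power_adj_one)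
  show ?thesis by (rule not_class2_if_universal_vertex[OF assms(1) irr one_closed univ col])
qed

lemma power_graph_class2_if_cyclic_prime_power:
  assumes "cyclic_group G" "prime p" "odd p" "a \<ge> 1" "order G = p ^ a"
  shows "is_class2 (carrier G) (power_adj G)"
proof -
  have "p \<noteq> 2" using assms(3) by auto
  then have "p \<ge> 3" using prime_ge_2_nat[OF assms(2)] by linarith
  moreover have "p \<le> p ^ a" using power_increasing[of 1 a p] assms(4) \<open>p \<ge> 3\<close> by simp
  ultimately have card: "card (carrier G) \<ge> 3" using assms(5) unfolding order_def by simp
  then have "finite (carrier G)" by (simp add: card_ge_0_finite)
  moreover have "odd (card (carrier G))" using assms(3,5) unfolding order_def by (simp add: even_power)
  moreover have "power_adj G u v \<longleftrightarrow> u \<noteq> v" if "u \<in> carrier G" "v \<in> carrier G" for u v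
    using power_adj_cyclic_prime_power[OF assms(1,2,5) that] power_adj_irrefl[of G u] by blast
  ultimately show ?thesis using complete_graph_odd_class2 card by blast
qed

end

theorem mainTheorem2:
  fixes G :: "('a, 'b) monoid_scheme"
  assumes "group G" and "finite (carrier G)"
  shows "is_class2 (carrier G) (power_adj G) \<longleftrightarrow>
         (cyclic_group G \<and>
          (\<exists>(p::nat) (a::nat). prime p \<and> odd p \<and> a \<ge> 1 \<and> order G = p ^ a))"
proof -
  interpret group G by fact
  show ?thesis
  proof
    assume "is_class2 (carrier G) (power_adj G)"
    then show "cyclic_group G \<and> (\<exists>p a. prime p \<and> odd p \<and> a \<ge> 1 \<and> order G = p ^ a)"
      using power_graph_not_class2[OF assms(2)] by blast
  next
    assume "cyclic_group G \<and> (\<exists>p a. prime p \<and> odd p \<and> a \<ge> 1 \<and> order G = p ^ a)"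
    then show "is_class2 (carrier G) (power_adj G)"
      using power_graph_class2_if_cyclic_prime_power by blast
  qed
qed

end
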